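(* Let $n>1$ and let $a_1,\dots,a_n$ be regular closed subsets of $\mathbb{R}^2$ such that $\mathrm{int}(a_i\cup\dots\cup a_n)$ is connected for each $1\le i\le n$, $a_i\cdot a_j=\emptyset$ for all $1\le i<j\le n$, and $a_i\cap a_j=\emptyset$ for all $1\le i<j\le n$ with $j-i>1$. Then every point $p_1\in\mathrm{int}(a_1)$ can be connected to every point $p_n\in\mathrm{int}(a_n)$ by a Jordan arc $\alpha=\alpha_1\cdots\alpha_{n-1}$ such that, for all $1\le i<n$, $\alpha_i$ is a non-degenerate Jordan arc in $\mathrm{int}(a_i\cup a_{i+1})$ starting at a point $p_i\in\mathrm{int}(a_i)$.
   Context: $a\cdot b$ denotes $\overline{\mathrm{int}(a\cap b)}$. A Jordan arc is a continuous injective map $[0,1]\to\mathbb{R}^2$ (non-degenerate) or a constant map (degenerate), identified with its image. $\alpha=\alpha_1\cdots\alpha_{n-1}$ denotes a Jordan arc from $p_1$ to $p_n$ that is the concatenation of the arcs $\alpha_1,\dots,\alpha_{n-1}$ in order, each $\alpha_i$ ending where $\alpha_{i+1}$ begins. *)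

theory Defs
  imports "HOL-Analysis.Analysis"
begin

definition regular_closed :: "'a::topological_space set \<Rightarrow> bool" where
  "regular_closed A \<longleftrightarrow> closure (interior A) = A"

text \<open>The product a \<cdot> b = closure of the interior of a \<inter> b.\<close>
definition rc_meet :: "'a::topological_space set \<Rightarrow> 'a set \<Rightarrow> 'a set" where
  "rc_meet a b = closure (interior (a \<inter> b))"

fun joinpaths_list :: "(real \<Rightarrow> 'a::topological_space) list \<Rightarrow> real \<Rightarrow> 'a" where
  "joinpaths_list [] = (\<lambda>_. undefined)"
| "joinpaths_list [g] = g"
| "joinpaths_list (g # gs) = g +++ joinpaths_list gs"

end

theory Submission
  imports Defs
begin

(*
  Build the chain backwards from p_n.  From a point of int a_i, the connected component of
  int (a_i \<union> a_(i+1)) containing it must reach int a_(i+1): otherwise it lies in a_i, is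
  closed in the connected set int (a_i \<union> ... \<union> a_n) because a_i misses a_(i+2), ..., a_n,
  and so would be all of it.  An arc in that component is cut at its first point on the next arc
  of the chain (which lies in int a_(i+1)), so consecutive arcs meet only at their junction;
  arcs two or more steps apart lie in the disjoint open sets int (a_j \<union> a_(j+1)), hence the
  concatenation is again an arc.
*)

lemma regular_closed_imp_closed: "regular_closed A \<Longrightarrow> closed A"
  unfolding regular_closed_def by (metis closed_closure)

lemma rc_meet_eq_empty_iff: "rc_meet A B = {} \<longleftrightarrow> interior A \<inter> interior B = {}"
  by (simp add: rc_meet_def)

lemma joinpaths_list_Cons: "xs \<noteq> [] \<Longrightarrow> joinpaths_list (x # xs) = x +++ joinpaths_list xs"
  by (cases xs) auto

lemma arc_joinpaths_list_upt:
  assumes "i < n"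
    and arcs: "\<And>j. i \<le> j \<Longrightarrow> j < n \<Longrightarrow> arc (g j)"
    and joins: "\<And>j. i \<le> j \<Longrightarrow> Suc j < n \<Longrightarrow> pathfinish (g j) = pathstart (g (Suc j))"
    and adjacent: "\<And>j. i \<le> j \<Longrightarrow> Suc j < n \<Longrightarrow>
      path_image (g j) \<inter> path_image (g (Suc j)) \<subseteq> {pathstart (g (Suc j))}"
    and apart: "\<And>j k. i \<le> j \<Longrightarrow> Suc j < k \<Longrightarrow> k < n \<Longrightarrow>
      path_image (g j) \<inter> path_image (g k) = {}"
  shows "arc (joinpaths_list (map g [i..<n]))"
proof -
  have "arc (joinpaths_list (map g [m..<n]))
    \<and> pathstart (joinpaths_list (map g [m..<n])) = pathstart (g m)
    \<and> path_image (joinpaths_list (map g [m..<n])) = (\<Union>j\<in>{m..<n}. path_image (g j))"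
    if "m \<le> n - 1" "i \<le> m" for m
    using that
  proof (induction m rule: inc_induct)
    case base
    have "{n - 1..<n} = {n - 1}" using \<open>i < n\<close> by auto
    then show ?case using \<open>i < n\<close> arcs by (simp add: upt_rec)
  next
    case (step m)
    let ?rest = "joinpaths_list (map g [Suc m..<n])"
    have split: "map g [m..<n] = g m # map g [Suc m..<n]" "map g [Suc m..<n] \<noteq> []"
      and range: "{m..<n} = insert m {Suc m..<n}"
      using step.hyps by (auto simp: upt_conv_Cons)
    note IH = step.IH[OF le_SucI[OF step.prems]]
    have "path_image (g m) \<inter> path_image ?rest \<subseteq> {pathstart ?rest}"
    proof -
      have "path_image (g m) \<inter> path_image (g k) \<subseteq> {pathstart (g (Suc m))}"
        if "Suc m \<le> k" "k < n" for k
        using adjacent[of m] apart[of m k] that step.hyps step.prems by (cases "k = Suc m") auto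
      then have "path_image (g m) \<inter> (\<Union>k\<in>{Suc m..<n}. path_image (g k))
          \<subseteq> {pathstart (g (Suc m))}"
        by fastforce
      then show ?thesis using IH by simp
    qed
    then show ?case
      unfolding split(1) joinpaths_list_Cons[OF split(2)] range
      using IH step.hyps step.prems arcs joins by (simp add: arc_join path_image_join)
  qed
  then show ?thesis using \<open>i < n\<close> by simp
qed

lemma path_first_entry_closed:
  fixes g :: "real \<Rightarrow> 'a::real_normed_vector"
  assumes "path g" "closed S" "pathstart g \<notin> S" "pathfinish g \<in> S"
  obtains u where "0 < u" "u \<le> 1" "g u \<in> S" "path_image (subpath 0 u g) \<inter> S \<subseteq> {g u}"
proof -
  obtain u where u: "0 \<le> u" "u \<le> 1" "g u \<in> frontier (- S)"
    and before: "path_image (subpath 0 u g) - {g u} \<subseteq> interior (- S)"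
    using subpath_to_frontier[of g "- S"] assms closure_subset by blast
  have "g u \<in> S"
    using u(3) frontier_subset_closed[of S] assms(2) by (auto simp: frontier_complement)
  moreover have "0 < u"
    using \<open>g u \<in> S\<close> assms(3) u(1) by (cases "u = 0") (auto simp: pathstart_def)
  moreover have "path_image (subpath 0 u g) \<inter> S \<subseteq> {g u}"
    using before interior_subset[of "- S"] by blast
  ultimately show ?thesis using that u(2) by blast
qed

lemma connected_component_meets_interior:
  fixes A B C :: "'a::real_normed_vector set"
  assumes "closed A" "closed C" "A \<inter> C = {}"
    and conn: "connected (interior (A \<union> B \<union> C))"
    and "x \<in> interior A" and not_sub: "\<not> interior (A \<union> B \<union> C) \<subseteq> interior A"
  shows "connected_component_set (interior (A \<union> B)) x \<inter> interior B \<noteq> {}"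
proof
  define V where "V = interior (A \<union> B)"
  define U where "U = interior (A \<union> B \<union> C)"
  define W where "W = connected_component_set V x"
  assume W_B: "W \<inter> interior B = {}"
  have "open W" "W \<subseteq> V" "x \<in> W"
    using \<open>x \<in> interior A\<close> interior_mono[of A "A \<union> B"]
    by (auto simp: W_def V_def open_connected_component connected_component_subset)
  have "W - A \<subseteq> interior B"
    using \<open>open W\<close> \<open>closed A\<close> \<open>W \<subseteq> V\<close> interior_subset[of "A \<union> B"]
    by (intro interior_maximal) (auto simp: V_def)
  then have "W \<subseteq> A" using W_B by blast
  then have W_A: "W \<subseteq> interior A" using \<open>open W\<close> by (rule interior_maximal)
  have "U \<inter> closure W \<subseteq> W"
  proof -
    have "U - C \<subseteq> V"
      unfolding U_def V_def using \<open>closed C\<close> interior_subset[of "A \<union> B \<union> C"]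
      by (intro interior_maximal) auto
    moreover have "closure W \<inter> C = {}"
      using closure_minimal[OF \<open>W \<subseteq> A\<close> \<open>closed A\<close>] \<open>A \<inter> C = {}\<close> by blast
    moreover obtain T where "closed T" "W = V \<inter> T"
      using closedin_connected_component[of V x] by (auto simp: W_def closedin_closed)
    ultimately show ?thesis using closure_minimal[of W T] by blast
  qed
  then have "W = U \<inter> closure W"
    using \<open>W \<subseteq> V\<close> closure_subset[of W] interior_mono[of "A \<union> B" "A \<union> B \<union> C"]
    by (auto simp: U_def V_def)
  then have "closedin (top_of_set U) W"
    by (metis closed_closure closedin_closed_Int)
  moreover have "openin (top_of_set U) W"
    using \<open>open W\<close> \<open>W \<subseteq> V\<close> interior_mono[of "A \<union> B" "A \<union> B \<union> C"]
    by (auto simp: U_def V_def openin_open_eq)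
  ultimately have "W = U"
    using conn \<open>x \<in> W\<close> by (auto simp: U_def connected_clopen)
  then show False using W_A not_sub by (simp add: U_def)
qed

lemma arc_into_adjacent_interior:
  fixes A B C :: "'a::banach set"
  assumes "closed A" "closed C" "A \<inter> C = {}"
    and "connected (interior (A \<union> B \<union> C))"
    and "x \<in> interior A" and "\<not> interior (A \<union> B \<union> C) \<subseteq> interior A"
    and "interior A \<inter> interior B = {}"
  obtains h where "arc h" "pathstart h = x" "pathfinish h \<in> interior B"
    "path_image h \<subseteq> interior (A \<union> B)"
proof -
  define W where "W = connected_component_set (interior (A \<union> B)) x"
  obtain y where y: "y \<in> W" "y \<in> interior B"
    using connected_component_meets_interior[OF assms(1-6)] by (auto simp: W_def)
  have "x \<in> W"
    using \<open>x \<in> interior A\<close> interior_mono[of A "A \<union> B"] by (auto simp: W_def)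
  moreover have "path_connected W"
    by (simp add: W_def open_path_connected_component_set[symmetric]
        path_connected_path_component)
  moreover have "x \<noteq> y" using y(2) assms(5,7) by auto
  ultimately obtain h where "arc h" "path_image h \<subseteq> W" "pathstart h = x" "pathfinish h = y"
    using y(1) by (meson path_connected_arcwise)
  moreover have "W \<subseteq> interior (A \<union> B)" by (simp add: W_def connected_component_subset)
  ultimately show ?thesis using that y(2) by blast
qed

locale closed_chain =
  fixes a :: "nat \<Rightarrow> 'a::banach set" and n :: nat
  assumes closed: "\<And>i. 1 \<le> i \<Longrightarrow> i \<le> n \<Longrightarrow> closed (a i)"
    and connected_interior_tail:
      "\<And>i. 1 \<le> i \<Longrightarrow> i \<le> n \<Longrightarrow> connected (interior (\<Union>j\<in>{i..n}. a j))"
    and interior_disjoint: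
      "\<And>i j. 1 \<le> i \<Longrightarrow> i < j \<Longrightarrow> j \<le> n \<Longrightarrow> interior (a i) \<inter> interior (a j) = {}"
    and disjoint: "\<And>i j. 1 \<le> i \<Longrightarrow> Suc i < j \<Longrightarrow> j \<le> n \<Longrightarrow> a i \<inter> a j = {}"
begin

lemma interior_pairs_disjoint:
  assumes "1 \<le> i" "Suc (Suc i) \<le> j" "Suc j \<le> n"
  shows "interior (a i \<union> a (Suc i)) \<inter> interior (a j \<union> a (Suc j)) = {}"
proof -
  have "(a i \<union> a (Suc i)) \<inter> (a j \<union> a (Suc j)) \<subseteq> a (Suc i) \<inter> a j"
    using disjoint[of i j] disjoint[of i "Suc j"] disjoint[of "Suc i" "Suc j"] assms by auto
  then have "interior ((a i \<union> a (Suc i)) \<inter> (a j \<union> a (Suc j)))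
      \<subseteq> interior (a (Suc i) \<inter> a j)"
    by (rule interior_mono)
  then show ?thesis using interior_disjoint[of "Suc i" j] assms by simp
qed

lemma interior_pairs_overlap:
  assumes "1 \<le> i" "Suc (Suc i) \<le> n"
  shows "interior (a i \<union> a (Suc i)) \<inter> interior (a (Suc i) \<union> a (Suc (Suc i)))
    \<subseteq> interior (a (Suc i))"
proof -
  have "(a i \<union> a (Suc i)) \<inter> (a (Suc i) \<union> a (Suc (Suc i))) \<subseteq> a (Suc i)"
    using disjoint[of i "Suc (Suc i)"] assms by auto
  then show ?thesis by (metis interior_Int interior_mono)
qed

lemma arc_into_next_interior:
  assumes "1 \<le> i" "Suc i < n" "x \<in> interior (a i)" "q \<in> interior (a n)"
  obtains h where "arc h" "pathstart h = x" "pathfinish h \<in> interior (a (Suc i))"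
    "path_image h \<subseteq> interior (a i \<union> a (Suc i))"
proof (rule arc_into_adjacent_interior)
  let ?C = "\<Union>j\<in>{Suc (Suc i)..n}. a j"
  have tail: "(\<Union>j\<in>{i..n}. a j) = a i \<union> a (Suc i) \<union> ?C"
  proof -
    have "{i..n} = insert i (insert (Suc i) {Suc (Suc i)..n})" using assms by auto
    then show ?thesis by auto
  qed
  show "closed (a i)" using closed assms by simp
  show "closed ?C" using closed assms by (intro closed_UN) auto
  show "a i \<inter> ?C = {}" using disjoint[of i] assms(1) by (fastforce simp: Suc_le_eq)
  show "connected (interior (a i \<union> a (Suc i) \<union> ?C))"
    using connected_interior_tail[of i] assms by (simp add: tail)
  have "q \<in> interior (a i \<union> a (Suc i) \<union> ?C)"
  proof -
    have "a n \<subseteq> (\<Union>j\<in>{i..n}. a j)" using assms(2) by (intro UN_upper) auto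
    then have "q \<in> interior (\<Union>j\<in>{i..n}. a j)" using assms(4) interior_mono by blast
    then show ?thesis by (simp only: tail)
  qed
  then show "\<not> interior (a i \<union> a (Suc i) \<union> ?C) \<subseteq> interior (a i)"
    using interior_disjoint[OF assms(1) _ order_refl] assms(2,4)
    by (meson Suc_lessD disjoint_iff subsetD)
  show "interior (a i) \<inter> interior (a (Suc i)) = {}" using interior_disjoint assms by simp
  show "x \<in> interior (a i)" by (fact assms(3))
qed (rule that)

definition arc_link :: "(nat \<Rightarrow> real \<Rightarrow> 'a) \<Rightarrow> (nat \<Rightarrow> 'a) \<Rightarrow> nat \<Rightarrow> bool" where
  "arc_link g p j \<longleftrightarrow> arc (g j) \<and> pathstart (g j) = p j \<and> pathfinish (g j) = p (Suc j)
     \<and> p j \<in> interior (a j) \<and> p (Suc j) \<in> interior (a (Suc j))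
     \<and> path_image (g j) \<subseteq> interior (a j \<union> a (Suc j))"

definition arc_chain :: "(nat \<Rightarrow> real \<Rightarrow> 'a) \<Rightarrow> (nat \<Rightarrow> 'a) \<Rightarrow> nat \<Rightarrow> bool" where
  "arc_chain g p i \<longleftrightarrow> (\<forall>j\<in>{i..<n}. arc_link g p j)
     \<and> (\<forall>j. i \<le> j \<and> Suc j < n \<longrightarrow>
          path_image (g j) \<inter> path_image (g (Suc j)) \<subseteq> {p (Suc j)})"

lemma arc_chain_unfold:
  assumes "i < n"
  shows "arc_chain g p i \<longleftrightarrow> arc_link g p i
    \<and> (Suc i < n \<longrightarrow> path_image (g i) \<inter> path_image (g (Suc i)) \<subseteq> {p (Suc i)})
    \<and> arc_chain g p (Suc i)"
proof -
  have "{i..<n} = insert i {Suc i..<n}" using assms by auto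
  moreover have "(\<forall>j. i \<le> j \<and> Suc j < n \<longrightarrow> Q j) \<longleftrightarrow>
      (Suc i < n \<longrightarrow> Q i) \<and> (\<forall>j. Suc i \<le> j \<and> Suc j < n \<longrightarrow> Q j)" for Q :: "nat \<Rightarrow> bool"
    using Suc_le_eq le_eq_less_or_eq by auto
  ultimately show ?thesis unfolding arc_chain_def by auto
qed

lemma arc_chain_cong:
  assumes "\<And>j. i \<le> j \<Longrightarrow> g' j = g j" "\<And>j. i \<le> j \<Longrightarrow> p' j = p j"
  shows "arc_chain g' p' i \<longleftrightarrow> arc_chain g p i"
  using assms unfolding arc_chain_def arc_link_def by (simp add: le_SucI)

lemma arc_chain_extend:
  assumes "1 \<le> i" "Suc i < n" and chain: "arc_chain g p (Suc i)"
    and h: "arc h" "pathstart h = x" "pathfinish h = p (Suc i)" "x \<in> interior (a i)"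
      "path_image h \<subseteq> interior (a i \<union> a (Suc i))"
  obtains g' p' where "p' i = x" "p' n = p n" "arc_chain g' p' i"
proof -
  let ?k = "g (Suc i)"
  define S where "S = path_image ?k"
  have next_link: "arc_link g p (Suc i)"
    and next_adjacent: "Suc (Suc i) < n \<Longrightarrow>
      path_image ?k \<inter> path_image (g (Suc (Suc i))) \<subseteq> {p (Suc (Suc i))}"
    and rest: "arc_chain g p (Suc (Suc i))"
    using chain arc_chain_unfold[OF assms(2)] by auto
  have overlap: "interior (a i \<union> a (Suc i)) \<inter> S \<subseteq> interior (a (Suc i))"
    using interior_pairs_overlap[of i] next_link assms(1,2) by (auto simp: S_def arc_link_def)
  have "pathstart h \<notin> S"
    using overlap h(2,4,5) interior_disjoint[of i "Suc i"] assms(1,2) pathstart_in_path_image[of h]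
    by auto
  moreover have "pathfinish h \<in> S"
    using next_link h(3) pathstart_in_path_image[of ?k] by (auto simp: S_def arc_link_def)
  moreover have "closed S"
    using next_link by (simp add: S_def arc_link_def closed_path_image arc_imp_path)
  ultimately obtain s where s: "0 < s" "s \<le> 1" "h s \<in> S"
    and first: "path_image (subpath 0 s h) \<inter> S \<subseteq> {h s}"
    using path_first_entry_closed h(1) arc_imp_path by metis
  define z where "z = h s"
  obtain u where u: "u \<in> {0..1}" "?k u = z"
    using s(3) by (auto simp: S_def z_def path_image_def)
  have "z \<in> interior (a i \<union> a (Suc i))"
    using h(5) s(1,2) by (auto simp: z_def path_image_def)
  then have z_int: "z \<in> interior (a (Suc i))"
    using overlap s(3) by (auto simp: z_def)
  have k_end: "?k 1 = p (Suc (Suc i))"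
    using next_link by (simp add: arc_link_def pathfinish_def)
  have "u \<noteq> 1"
  proof
    assume "u = 1"
    then have "z \<in> interior (a (Suc (Suc i)))"
      using u(2) k_end next_link by (auto simp: arc_link_def)
    then show False
      using z_int interior_disjoint[of "Suc i" "Suc (Suc i)"] assms(2) by auto
  qed
  \<comment> \<open>Stop h where it first meets the next arc, and start that arc there instead.\<close>
  define g' where "g' = g(i := subpath 0 s h, Suc i := subpath u 1 ?k)"
  define p' where "p' = p(i := x, Suc i := z)"
  have tail_sub: "path_image (subpath u 1 ?k) \<subseteq> S"
    using u(1) path_image_subpath_subset[of u 1 ?k] by (simp add: S_def)
  have "arc_link g' p' i"
    using h s arc_subpath_arc[of h 0 s] path_image_subpath_subset[of 0 s h] z_int
    by (auto simp: arc_link_def g'_def p'_def z_def h(2)[unfolded pathstart_def])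
  moreover have "path_image (g' i) \<inter> path_image (g' (Suc i)) \<subseteq> {p' (Suc i)}"
    using first tail_sub by (auto simp: g'_def p'_def z_def)
  moreover have "arc_link g' p' (Suc i)"
    using next_link u \<open>u \<noteq> 1\<close> arc_subpath_arc[of ?k u 1] tail_sub z_int k_end
    by (auto simp: arc_link_def g'_def p'_def S_def)
  moreover have "Suc (Suc i) < n \<Longrightarrow>
      path_image (g' (Suc i)) \<inter> path_image (g' (Suc (Suc i))) \<subseteq> {p' (Suc (Suc i))}"
    using next_adjacent tail_sub by (auto simp: g'_def p'_def S_def)
  moreover have "arc_chain g' p' (Suc (Suc i))"
    using rest arc_chain_cong[of "Suc (Suc i)" g' g p' p] by (simp add: g'_def p'_def)
  ultimately have "arc_chain g' p' i"
    using arc_chain_unfold assms(2) by (metis Suc_lessD)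
  moreover have "p' i = x" "p' n = p n" using assms(2) by (auto simp: p'_def)
  ultimately show ?thesis using that by blast
qed

lemma arc_chain_exists:
  assumes "1 \<le> i" "i < n" "x \<in> interior (a i)" "q \<in> interior (a n)"
  obtains g p where "p i = x" "p n = q" "arc_chain g p i"
proof -
  have "\<forall>x \<in> interior (a m). \<exists>g p. p m = x \<and> p n = q \<and> arc_chain g p m"
    if "m \<le> n - 1" "i \<le> m" for m
    using that
  proof (induction m rule: inc_induct)
    case base
    let ?m = "n - 1"
    have n: "Suc ?m = n" "1 \<le> ?m" using assms(1,2) by auto
    then have "{?m..n} = {?m, Suc ?m}" "{?m..<n} = {?m}" by auto
    then have "path_connected (interior (a ?m \<union> a n))"
      using connected_interior_tail[of ?m] n by (simp add: connected_open_path_connected)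
    show ?case
    proof
      fix x assume x: "x \<in> interior (a ?m)"
      have "x \<in> interior (a ?m \<union> a n)" "q \<in> interior (a ?m \<union> a n)" "x \<noteq> q"
        using x assms(4) n interior_disjoint[of ?m n]
          interior_mono[of "a ?m" "a ?m \<union> a n"] interior_mono[of "a n" "a ?m \<union> a n"]
        by auto
      then obtain h where h: "arc h" "path_image h \<subseteq> interior (a ?m \<union> a n)"
        "pathstart h = x" "pathfinish h = q"
        using \<open>path_connected _\<close> by (meson path_connected_arcwise)
      define p where "p = (\<lambda>j. if j = ?m then x else q)"
      have "arc_chain (\<lambda>_. h) p ?m"
        using h x assms(4) n \<open>{?m..<n} = {?m}\<close> by (auto simp: arc_chain_def arc_link_def p_def)
      moreover have "p ?m = x" "p n = q" using n by (auto simp: p_def)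
      ultimately show "\<exists>g p. p ?m = x \<and> p n = q \<and> arc_chain g p ?m" by blast
    qed
  next
    case (step m)
    show ?case
    proof
      fix x assume x: "x \<in> interior (a m)"
      have m: "1 \<le> m" "Suc m < n" using step assms(1) by auto
      obtain h where h: "arc h" "pathstart h = x" "pathfinish h \<in> interior (a (Suc m))"
        "path_image h \<subseteq> interior (a m \<union> a (Suc m))"
        using arc_into_next_interior[OF m x assms(4)] by blast
      obtain g p where "p (Suc m) = pathfinish h" "p n = q" "arc_chain g p (Suc m)"
        using step.IH step.prems h(3) by (meson le_SucI)
      then show "\<exists>g p. p m = x \<and> p n = q \<and> arc_chain g p m"
        using arc_chain_extend[OF m, of g p h x] h x by metis
    qed
  qed
  moreover have "i \<le> n - 1" using assms(2) by simp
  ultimately show ?thesis using assms(3) that by blast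
qed

lemma arc_chain_imp_arc:
  assumes "1 \<le> i" "i < n" "arc_chain g p i"
  shows "arc (joinpaths_list (map g [i..<n]))"
proof (rule arc_joinpaths_list_upt[OF \<open>i < n\<close>])
  fix j k assume jk: "i \<le> j" "Suc j < k" "k < n"
  then have "path_image (g j) \<subseteq> interior (a j \<union> a (Suc j))"
    and "path_image (g k) \<subseteq> interior (a k \<union> a (Suc k))"
    using assms(3) by (auto simp: arc_chain_def arc_link_def)
  then show "path_image (g j) \<inter> path_image (g k) = {}"
    using interior_pairs_disjoint[of j k] assms(1) jk by auto
qed (use assms in \<open>auto simp: arc_chain_def arc_link_def\<close>)

end

theorem lemma5p3:
  fixes a :: "nat \<Rightarrow> (real^2) set" and n :: nat and q1 qn :: "real^2"
  assumes "n > 1"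
    and "\<forall>i\<in>{1..n}. regular_closed (a i)"
    and "\<forall>i\<in>{1..n}. connected (interior (\<Union>j\<in>{i..n}. a j))"
    and "\<forall>i j. 1 \<le> i \<and> i < j \<and> j \<le> n \<longrightarrow> rc_meet (a i) (a j) = {}"
    and "\<forall>i j. 1 \<le> i \<and> i < j \<and> j \<le> n \<and> j - i > 1 \<longrightarrow> a i \<inter> a j = {}"
    and "q1 \<in> interior (a 1)" and "qn \<in> interior (a n)"
  shows "\<exists>(g :: nat \<Rightarrow> real \<Rightarrow> real^2) (p :: nat \<Rightarrow> real^2).
           p 1 = q1 \<and> p n = qn \<and>
           arc (joinpaths_list (map g [1..<n])) \<and>
           (\<forall>i\<in>{1..<n}. arc (g i) \<and> pathstart (g i) = p i \<and> pathfinish (g i) = p (Suc i)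
                         \<and> p i \<in> interior (a i)
                         \<and> path_image (g i) \<subseteq> interior (a i \<union> a (Suc i)))"
proof -
  interpret closed_chain a n
  proof
    show "closed (a i)" if "1 \<le> i" "i \<le> n" for i
      using assms(2) that by (simp add: regular_closed_imp_closed)
    show "interior (a i) \<inter> interior (a j) = {}" if "1 \<le> i" "i < j" "j \<le> n" for i j
      using assms(4) that by (simp add: rc_meet_eq_empty_iff)
    show "a i \<inter> a j = {}" if "1 \<le> i" "Suc i < j" "j \<le> n" for i j
      using assms(5) that by simp
  qed (use assms(3) in simp)
  obtain g p where "p 1 = q1" "p n = qn" and chain: "arc_chain g p 1"
    using arc_chain_exists[of 1 q1 qn] assms(1,6,7) by blast
  moreover have "arc (joinpaths_list (map g [1..<n]))"
    using arc_chain_imp_arc[OF _ _ chain] assms(1) by simp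
  moreover have "\<forall>i\<in>{1..<n}. arc_link g p i"
    using chain by (simp add: arc_chain_def)
  ultimately show ?thesis unfolding arc_link_def by blast
qed

end
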